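(* Let $t\ge 3$ and let $\mathcal{H}$ be an $n$-vertex $3$-uniform hypergraph that does not contain $K_{2,t}$ as a trace. Let $A$ be the set of edges of $\mathcal{H}$ containing at least one pair of vertices whose co-degree in $\mathcal{H}$ is $1$, and let $B=\mathcal{H}\setminus A$; for a vertex $x$ let $d(x)$ be the number of edges of $B$ containing $x$. For a vertex $x$, let $N_1(x)=\{z: \exists e\in B,\ \{x,z\}\subseteq e\}$ and $N_2(x)=\{z\notin N_1(x)\cup\{x\}: \exists e\in B,\ z\in e,\ e\cap N_1(x)\neq\emptyset\}$. Fix a vertex $v$, and for $u\in N_1(v)$ let $E_u=\{e\in B: e\cap N_1(v)=\{u\}\}$ and $V_u=\{w\in N_2(v): \exists e\in E_u,\ w\in e\}$. Then for all $u\in N_1(v)$, $$|V_u|\ge \frac{2}{3t-3}\left(d(u)-(3t-3)-3(t-1)^2(6t-2)\right).$$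
   Context: A hypergraph $\mathcal{H}$ contains a graph $F$ (vertices $v_1,\dots,v_p$, edges $e_1,\dots,e_q$) as a trace if there exist distinct vertices $w_1,\dots,w_p\in V(\mathcal{H})$ and distinct edges $f_1,\dots,f_q\in E(\mathcal{H})$ such that whenever $e_i=v_\alpha v_\beta$, $f_i\cap\{w_1,\dots,w_p\}=\{w_\alpha,w_\beta\}$. The co-degree of a pair $\{x,y\}$ in $\mathcal{H}$ is the number of edges of $\mathcal{H}$ containing $\{x,y\}$. $\mathcal{H}\setminus A$ denotes the hypergraph on $V(\mathcal{H})$ with edge set $E(\mathcal{H})\setminus A$. *)

theory Defs
  imports Complex_Main
begin

definition uniform3 :: "'a set \<Rightarrow> 'a set set \<Rightarrow> bool" where
  "uniform3 V H \<longleftrightarrow> finite V \<and> (\<forall>e\<in>H. e \<subseteq> V \<and> card e = 3)"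

definition contains_trace :: "'a set \<Rightarrow> 'a set set \<Rightarrow> 'b set \<Rightarrow> 'b set set \<Rightarrow> bool" where
  "contains_trace V H VF EF \<longleftrightarrow>
     (\<exists>w f. inj_on w VF \<and> w ` VF \<subseteq> V \<and> inj_on f EF \<and> f ` EF \<subseteq> H \<and>
            (\<forall>e\<in>EF. f e \<inter> w ` VF = w ` e))"

text \<open>K_{2,t}: parts {0,1} and {2,...,t+1}.\<close>
definition K2t_verts :: "nat \<Rightarrow> nat set" where
  "K2t_verts t = {0..<t+2}"

definition K2t_edges :: "nat \<Rightarrow> nat set set" where
  "K2t_edges t = {{i, j} | i j. i < 2 \<and> 2 \<le> j \<and> j < t + 2}"

definition codegree :: "'a set set \<Rightarrow> 'a \<Rightarrow> 'a \<Rightarrow> nat" where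
  "codegree H x y = card {e\<in>H. {x, y} \<subseteq> e}"

definition edgesA :: "'a set set \<Rightarrow> 'a set set" where
  "edgesA H = {e\<in>H. \<exists>x y. x \<noteq> y \<and> {x, y} \<subseteq> e \<and> codegree H x y = 1}"

definition edgesB :: "'a set set \<Rightarrow> 'a set set" where
  "edgesB H = H - edgesA H"

definition degB :: "'a set set \<Rightarrow> 'a \<Rightarrow> nat" where
  "degB H x = card {e\<in>edgesB H. x \<in> e}"

definition N1 :: "'a set set \<Rightarrow> 'a \<Rightarrow> 'a set" where
  "N1 H x = {z. z \<noteq> x \<and> (\<exists>e\<in>edgesB H. {x, z} \<subseteq> e)}"

definition N2 :: "'a set set \<Rightarrow> 'a \<Rightarrow> 'a set" where
  "N2 H x = {z. z \<notin> N1 H x \<union> {x} \<and> (\<exists>e\<in>edgesB H. z \<in> e \<and> e \<inter> N1 H x \<noteq> {})}"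

definition Eu :: "'a set set \<Rightarrow> 'a \<Rightarrow> 'a \<Rightarrow> 'a set set" where
  "Eu H v u = {e\<in>edgesB H. e \<inter> N1 H v = {u}}"

definition Vu :: "'a set set \<Rightarrow> 'a \<Rightarrow> 'a \<Rightarrow> 'a set" where
  "Vu H v u = {w\<in>N2 H v. \<exists>e\<in>Eu H v u. w \<in> e}"

end

theory Submission
  imports Defs
begin

(* Every pair {a, b} lies in at most 3t - 3 edges of B.  Indeed, by the co-degree condition
   defining B, the third vertex x of an edge {a, b, x} of B lies in an edge with a avoiding b
   and in an edge with b avoiding a.  If there were 3t - 2 such vertices x, one could choose t
   of them, each having such an edge to a and such an edge to b whose third vertex lies
   outside the chosen set; these 2t edges form a trace of K_{2,t}.  The choice is greedy in
   the two link graphs of a and b: in each graph at most a third of the vertices are the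
   only neighbour of two or more vertices (their pendants), so some vertex y has at most one
   pendant in both graphs, and deleting y together with neighbours of y covering its
   pendants isolates no other vertex.
   The edges of B at u are then the edges of E_u, at most 3t - 3 edges through v, and at most
   (3t - 3)^2 edges meeting N_1(v) in a second vertex z, since such a z is again a vertex of
   the above kind for the pair {u, v}.  Each edge of E_u has two vertices in V_u and each
   vertex of V_u lies in at most 3t - 3 edges of E_u, so double counting gives
   2 |E_u| <= (3t - 3) |V_u|. *)

definition no_isolated_graph_on :: "'a set \<Rightarrow> ('a \<Rightarrow> 'a set) \<Rightarrow> bool" where
  "no_isolated_graph_on Y N \<longleftrightarrow>
     (\<forall>y\<in>Y. N y \<noteq> {} \<and> y \<notin> N y \<and> (\<forall>z\<in>Y. z \<in> N y \<longleftrightarrow> y \<in> N z))"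

lemma no_isolated_graph_onD:
  assumes "no_isolated_graph_on Y N" "y \<in> Y"
  shows "N y \<noteq> {}" "y \<notin> N y" "z \<in> Y \<Longrightarrow> z \<in> N y \<longleftrightarrow> y \<in> N z"
  using assms unfolding no_isolated_graph_on_def by auto

definition pendants :: "('a \<Rightarrow> 'a set) \<Rightarrow> 'a set \<Rightarrow> 'a \<Rightarrow> 'a set" where
  "pendants N Y y = {s\<in>Y. N s = {y}}"

lemma pendants_subset_nbrs:
  assumes "no_isolated_graph_on Y N" "y \<in> Y"
  shows "pendants N Y y \<subseteq> N y"
  using assms unfolding no_isolated_graph_on_def pendants_def by blast

lemma card_pendants_le_1_if_pendant:
  assumes "no_isolated_graph_on Y N" "s \<in> pendants N Y y"
  shows "card (pendants N Y s) \<le> 1"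
proof -
  have "pendants N Y s \<subseteq> {y}"
    using assms unfolding no_isolated_graph_on_def pendants_def by blast
  then show ?thesis
    using card_mono[of "{y}"] by fastforce
qed

lemma card_many_pendants:
  assumes fin: "finite Y" and N: "no_isolated_graph_on Y N"
  shows "3 * card {y\<in>Y. 2 \<le> card (pendants N Y y)} \<le> card Y"
proof -
  define X where "X = {y\<in>Y. 2 \<le> card (pendants N Y y)}"
  have finX: "finite X" and XY: "X \<subseteq> Y"
    using fin unfolding X_def by auto
  have fin_pend: "finite (pendants N Y y)" for y
    using fin unfolding pendants_def by simp
  have disjoint: "pendants N Y y \<inter> pendants N Y y' = {}" if "y \<noteq> y'" for y y'
    using that unfolding pendants_def by auto
  have "pendants N Y y \<subseteq> Y - X" for y
    using card_pendants_le_1_if_pendant[OF N] unfolding X_def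
    by (fastforce simp: pendants_def)
  then have pend_X: "(\<Union>y\<in>X. pendants N Y y) \<subseteq> Y - X"
    by blast
  have "2 * card X = (\<Sum>y\<in>X. 2)"
    by simp
  also have "\<dots> \<le> (\<Sum>y\<in>X. card (pendants N Y y))"
    by (rule sum_mono) (simp add: X_def)
  also have "\<dots> = card (\<Union>y\<in>X. pendants N Y y)"
    using finX fin_pend disjoint by (simp add: card_UN_disjoint)
  also have "\<dots> \<le> card (Y - X)"
    using fin pend_X by (simp add: card_mono)
  also have "\<dots> = card Y - card X"
    using XY finX by (simp add: card_Diff_subset)
  finally show ?thesis
    unfolding X_def by simp
qed

lemma exists_few_pendants:
  assumes fin: "finite Y" and "Y \<noteq> {}"
    and P: "no_isolated_graph_on Y P" and Q: "no_isolated_graph_on Y Q"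
  obtains y where "y \<in> Y" "card (pendants P Y y) \<le> 1" "card (pendants Q Y y) \<le> 1"
proof -
  let ?XP = "{y\<in>Y. 2 \<le> card (pendants P Y y)}" and ?XQ = "{y\<in>Y. 2 \<le> card (pendants Q Y y)}"
  have "3 * card ?XP \<le> card Y" "3 * card ?XQ \<le> card Y"
    using card_many_pendants[OF fin P] card_many_pendants[OF fin Q] .
  moreover have "card Y > 0"
    using assms(1,2) by auto
  ultimately have card_less: "card (?XP \<union> ?XQ) < card Y"
    using card_Un_le[of ?XP ?XQ] by linarith
  have "\<not> Y \<subseteq> ?XP \<union> ?XQ"
  proof
    assume "Y \<subseteq> ?XP \<union> ?XQ"
    then have "card Y \<le> card (?XP \<union> ?XQ)"
      using fin by (intro card_mono) auto
    with card_less show False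
      by simp
  qed
  then obtain y where "y \<in> Y" "y \<notin> ?XP" "y \<notin> ?XQ"
    by blast
  then show ?thesis
    using that by simp
qed

lemma no_isolated_graph_on_delete:
  assumes N: "no_isolated_graph_on Y N" and Y': "Y' \<subseteq> Y - pendants N Y y - {y}"
  shows "no_isolated_graph_on Y' (\<lambda>x. N x - {y})"
  unfolding no_isolated_graph_on_def
proof (intro ballI conjI)
  fix z assume z: "z \<in> Y'"
  then have "N z \<noteq> {}" "\<not> N z \<subseteq> {y}" "z \<notin> N z"
    using N Y' unfolding no_isolated_graph_on_def pendants_def by (auto dest: subset_singletonD)
  then show "N z - {y} \<noteq> {}" "z \<notin> N z - {y}"
    by auto
  fix z' assume "z' \<in> Y'"
  then show "z' \<in> N z - {y} \<longleftrightarrow> z \<in> N z' - {y}"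
    using N Y' z unfolding no_isolated_graph_on_def by auto
qed

lemma exists_nbr_covering_pendants:
  assumes "finite Y" and N: "no_isolated_graph_on Y N" and "y \<in> Y"
    and "card (pendants N Y y) \<le> 1"
  obtains a where "a \<in> N y" "pendants N Y y \<subseteq> {a}"
proof (cases "pendants N Y y = {}")
  case True
  then show ?thesis
    using N \<open>y \<in> Y\<close> that unfolding no_isolated_graph_on_def by blast
next
  case False
  then obtain a where a: "a \<in> pendants N Y y"
    by blast
  have "finite (pendants N Y y)"
    using \<open>finite Y\<close> unfolding pendants_def by simp
  then have "pendants N Y y \<subseteq> {a}"
    using a \<open>card (pendants N Y y) \<le> 1\<close> by (auto simp: card_le_Suc0_iff_eq)
  then show ?thesis
    using that a pendants_subset_nbrs[OF N \<open>y \<in> Y\<close>] by blast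
qed

lemma exists_subset_with_nbrs_outside:
  assumes "finite Y" "no_isolated_graph_on Y P" "no_isolated_graph_on Y Q"
    and "3 * t \<le> card Y + 2"
  shows "\<exists>S\<subseteq>Y. card S = t \<and> (\<forall>s\<in>S. \<not> P s \<subseteq> S \<and> \<not> Q s \<subseteq> S)"
  using assms
proof (induction t arbitrary: Y P Q)
  case 0
  show ?case
    by (intro exI[of _ "{}"]) simp
next
  case (Suc t)
  note fin = Suc.prems(1) and P = Suc.prems(2) and Q = Suc.prems(3)
  have "Y \<noteq> {}"
    using Suc.prems(4) by auto
  then obtain y where y: "y \<in> Y" "card (pendants P Y y) \<le> 1" "card (pendants Q Y y) \<le> 1"
    using exists_few_pendants[OF fin _ P Q] by blast
  obtain a where a: "a \<in> P y" "pendants P Y y \<subseteq> {a}"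
    using exists_nbr_covering_pendants[OF fin P y(1,2)] .
  obtain b where b: "b \<in> Q y" "pendants Q Y y \<subseteq> {b}"
    using exists_nbr_covering_pendants[OF fin Q y(1,3)] .
  have "a \<noteq> y" "b \<noteq> y"
    using a(1) b(1) no_isolated_graph_onD(2)[OF P y(1)] no_isolated_graph_onD(2)[OF Q y(1)] by auto
  define Y' where "Y' = Y - {y, a, b}"
  have P': "no_isolated_graph_on Y' (\<lambda>x. P x - {y})"
    by (rule no_isolated_graph_on_delete[OF P]) (use a(2) in \<open>auto simp: Y'_def\<close>)
  have Q': "no_isolated_graph_on Y' (\<lambda>x. Q x - {y})"
    by (rule no_isolated_graph_on_delete[OF Q]) (use b(2) in \<open>auto simp: Y'_def\<close>)
  have "card {y, a, b} \<le> 3"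
    by (simp add: card_insert_if)
  then have "3 * t \<le> card Y' + 2"
    using Suc.prems(4) diff_card_le_card_Diff[of "{y, a, b}" Y] unfolding Y'_def by simp
  then obtain S' where S': "S' \<subseteq> Y'" "card S' = t"
      "\<forall>s\<in>S'. \<not> P s - {y} \<subseteq> S' \<and> \<not> Q s - {y} \<subseteq> S'"
    using Suc.IH[OF _ P' Q'] fin unfolding Y'_def by blast
  have "finite S'" "y \<notin> S'" "a \<notin> S'" "b \<notin> S'"
    using S'(1) fin finite_subset unfolding Y'_def by auto
  show ?case
  proof (intro exI conjI ballI)
    show "insert y S' \<subseteq> Y" "card (insert y S') = Suc t"
      using S' y(1) \<open>finite S'\<close> \<open>y \<notin> S'\<close> unfolding Y'_def by auto
    fix s assume "s \<in> insert y S'"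
    then show "\<not> P s \<subseteq> insert y S'" "\<not> Q s \<subseteq> insert y S'"
      using S'(3) a(1) b(1) \<open>a \<noteq> y\<close> \<open>b \<noteq> y\<close> \<open>a \<notin> S'\<close> \<open>b \<notin> S'\<close> by blast+
  qed
qed

lemma contains_traceI:
  assumes "inj_on w VF" "w ` VF \<subseteq> V" "\<forall>e\<in>EF. e \<subseteq> VF"
    and "\<forall>e\<in>EF. \<exists>f\<in>H. f \<inter> w ` VF = w ` e"
  shows "contains_trace V H VF EF"
proof -
  obtain f where f: "\<forall>e\<in>EF. f e \<in> H \<and> f e \<inter> w ` VF = w ` e"
    using bchoice[OF assms(4)[unfolded Bex_def]] by blast
  have "inj_on f EF"
  proof (rule inj_onI)
    fix e e' assume "e \<in> EF" "e' \<in> EF" "f e = f e'"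
    then have "w ` e = w ` e'"
      using f by metis
    then show "e = e'"
      using \<open>e \<in> EF\<close> \<open>e' \<in> EF\<close> assms(1,3) by (simp add: inj_on_image_eq_iff)
  qed
  then show ?thesis
    using assms(1,2) f unfolding contains_trace_def by blast
qed

lemma contains_K2t_traceI:
  assumes "a \<noteq> b" "a \<in> V" "b \<in> V" "S \<subseteq> V" "finite S" "card S = t" "a \<notin> S" "b \<notin> S"
    and edges: "\<And>c s. c \<in> {a, b} \<Longrightarrow> s \<in> S \<Longrightarrow> \<exists>f\<in>H. f \<inter> insert a (insert b S) = {c, s}"
  shows "contains_trace V H (K2t_verts t) (K2t_edges t)"
proof -
  obtain xs where xs: "set xs = S" "distinct xs"
    using finite_distinct_list[OF \<open>finite S\<close>] by blast
  define ys where "ys = a # b # xs"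
  have ys: "distinct ys" "length ys = t + 2"
    using xs assms(1,6-8) distinct_card[OF xs(2)] unfolding ys_def by auto
  have bij: "bij_betw (nth ys) (K2t_verts t) (insert a (insert b S))"
    by (rule bij_betw_nth) (use ys xs(1) in \<open>auto simp: K2t_verts_def ys_def\<close>)
  note img = bij_betw_imp_surj_on[OF bij]
  show ?thesis
  proof (rule contains_traceI)
    show "inj_on (nth ys) (K2t_verts t)"
      using bij by (rule bij_betw_imp_inj_on)
    show "nth ys ` K2t_verts t \<subseteq> V"
      using img assms(2-4) by simp
    show "\<forall>e\<in>K2t_edges t. e \<subseteq> K2t_verts t"
      unfolding K2t_edges_def K2t_verts_def by auto
    show "\<forall>e\<in>K2t_edges t. \<exists>f\<in>H. f \<inter> nth ys ` K2t_verts t = nth ys ` e"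
    proof
      fix e assume "e \<in> K2t_edges t"
      then obtain i j where ij: "e = {i, j}" "i < 2" "2 \<le> j" "j < t + 2"
        unfolding K2t_edges_def by blast
      have "ys ! i \<in> {a, b}" "ys ! j \<in> S"
        using ij xs(1) ys(2) unfolding ys_def by (auto simp: less_2_cases_iff nth_Cons')
      then show "\<exists>f\<in>H. f \<inter> nth ys ` K2t_verts t = nth ys ` e"
        using edges img ij(1) by simp
    qed
  qed
qed

lemma uniform3_finite_edges:
  assumes "uniform3 V H"
  shows "finite H"
proof -
  have "H \<subseteq> Pow V" "finite V"
    using assms unfolding uniform3_def by auto
  then show ?thesis
    by (simp add: finite_subset)
qed

lemma uniform3_edge_eq:
  assumes "uniform3 V H" "e \<in> H" "{a, b, c} \<subseteq> e" "distinct [a, b, c]"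
  shows "e = {a, b, c}"
proof -
  have "card e = 3" "finite e"
    using assms(1,2) unfolding uniform3_def by (auto intro: card_ge_0_finite)
  moreover have "card {a, b, c} = 3"
    using assms(4) by simp
  ultimately show ?thesis
    using card_subset_eq[OF _ assms(3)] by simp
qed

lemma uniform3_edge_distinct:
  assumes "uniform3 V H" "{a, b, c} \<in> H"
  shows "distinct [a, b, c]"
  using assms unfolding uniform3_def by (auto simp: card_insert_if split: if_splits)

lemma uniform3_edge_through_pair:
  assumes "uniform3 V H" "e \<in> H" "a \<in> e" "b \<in> e" "a \<noteq> b"
  obtains x where "x \<notin> {a, b}" "e = {a, b, x}"
proof -
  have "card e = 3" "finite e"
    using assms(1,2) unfolding uniform3_def by (auto intro: card_ge_0_finite)
  then have "card (e - {a, b}) = 1"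
    using assms(3-5) by (simp add: card_Diff_subset)
  then obtain x where "e - {a, b} = {x}"
    by (rule card_1_singletonE)
  then show ?thesis
    using that assms(3,4) by blast
qed

lemma edgesB_pair_in_other_edge:
  assumes "e \<in> edgesB H" "{x, y} \<subseteq> e" "x \<noteq> y"
  obtains f where "f \<in> H" "f \<noteq> e" "{x, y} \<subseteq> f"
proof -
  have "e \<in> H" "e \<notin> edgesA H"
    using assms(1) by (simp_all add: edgesB_def)
  have "{f\<in>H. {x, y} \<subseteq> f} \<noteq> {e}"
  proof
    assume "{f\<in>H. {x, y} \<subseteq> f} = {e}"
    then have "codegree H x y = 1"
      by (simp add: codegree_def)
    then have "e \<in> edgesA H"
      using \<open>e \<in> H\<close> assms(2,3) unfolding edgesA_def by blast
    with \<open>e \<notin> edgesA H\<close> show False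
      by contradiction
  qed
  moreover have "e \<in> {f\<in>H. {x, y} \<subseteq> f}"
    using \<open>e \<in> H\<close> assms(2) by simp
  ultimately obtain f where "f \<in> {f\<in>H. {x, y} \<subseteq> f}" "f \<noteq> e"
    by blast
  then show ?thesis
    by (intro that) auto
qed

lemma finite_edgesB:
  assumes "uniform3 V H"
  shows "finite (edgesB H)"
  using uniform3_finite_edges[OF assms] unfolding edgesB_def by simp

definition common_nbrs_apart :: "'a set set \<Rightarrow> 'a \<Rightarrow> 'a \<Rightarrow> 'a set" where
  "common_nbrs_apart H a b = {z. (\<exists>f\<in>H. {a, z} \<subseteq> f \<and> b \<notin> f) \<and> (\<exists>g\<in>H. {b, z} \<subseteq> g \<and> a \<notin> g)}"

lemma common_nbrs_apart_commute: "common_nbrs_apart H a b = common_nbrs_apart H b a"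
  unfolding common_nbrs_apart_def by blast

lemma common_nbrs_apart_subset:
  assumes "uniform3 V H"
  shows "common_nbrs_apart H a b \<subseteq> V"
  using assms unfolding uniform3_def common_nbrs_apart_def by blast

lemma finite_common_nbrs_apart:
  assumes "uniform3 V H"
  shows "finite (common_nbrs_apart H a b)"
  using common_nbrs_apart_subset[OF assms] assms unfolding uniform3_def by (blast intro: finite_subset)

lemma edgesB_third_vertex_in_common_nbrs_apart:
  assumes u3: "uniform3 V H" and e: "e \<in> edgesB H" "{a, b, x} \<subseteq> e" and abx: "distinct [a, b, x]"
  shows "x \<in> common_nbrs_apart H a b"
proof -
  have "e \<in> H"
    using e(1) unfolding edgesB_def by simp
  then have e_eq: "e = {a, b, x}"
    using uniform3_edge_eq[OF u3 _ e(2) abx] by simp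
  have avoid: "c \<notin> f" if "f \<in> H" "f \<noteq> e" "{d, x} \<subseteq> f" "distinct [c, d, x]" "{c, d} = {a, b}"
    for c d f
  proof
    assume "c \<in> f"
    then have "f = {c, d, x}"
      using uniform3_edge_eq[OF u3 that(1) _ that(4)] that(3) by simp
    then show False
      using that(2,5) e_eq by (auto simp: insert_commute)
  qed
  obtain f where f: "f \<in> H" "f \<noteq> e" "{a, x} \<subseteq> f"
    using edgesB_pair_in_other_edge[OF e(1)] e(2) abx by (metis distinct_length_2_or_more insert_subset)
  obtain g where g: "g \<in> H" "g \<noteq> e" "{b, x} \<subseteq> g"
    using edgesB_pair_in_other_edge[OF e(1)] e(2) abx by (metis distinct_length_2_or_more insert_subset)
  have "b \<notin> f" "a \<notin> g"
    using avoid[OF f, of b] avoid[OF g, of a] abx by auto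
  then show ?thesis
    unfolding common_nbrs_apart_def using f g by blast
qed

lemma codegree_edgesB_le_card_common_nbrs_apart:
  assumes u3: "uniform3 V H" and "a \<noteq> b"
  shows "codegree (edgesB H) a b \<le> card (common_nbrs_apart H a b)"
proof -
  have "{e\<in>edgesB H. {a, b} \<subseteq> e} \<subseteq> (\<lambda>x. {a, b, x}) ` common_nbrs_apart H a b"
  proof
    fix e assume e: "e \<in> {e\<in>edgesB H. {a, b} \<subseteq> e}"
    then have "e \<in> H"
      unfolding edgesB_def by simp
    then obtain x where x: "x \<notin> {a, b}" "e = {a, b, x}"
      by (rule uniform3_edge_through_pair[OF u3]) (use e \<open>a \<noteq> b\<close> in auto)
    then have "x \<in> common_nbrs_apart H a b"
      using edgesB_third_vertex_in_common_nbrs_apart[OF u3] e \<open>a \<noteq> b\<close> by auto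
    then show "e \<in> (\<lambda>x. {a, b, x}) ` common_nbrs_apart H a b"
      using x(2) by blast
  qed
  moreover have "finite (common_nbrs_apart H a b)"
    using finite_common_nbrs_apart[OF u3] .
  ultimately show ?thesis
    unfolding codegree_def by (meson card_image_le card_mono finite_imageI le_trans)
qed

definition link_avoiding :: "'a set set \<Rightarrow> 'a \<Rightarrow> 'a \<Rightarrow> 'a \<Rightarrow> 'a set" where
  "link_avoiding H a b z = {x. {a, z, x} \<in> H \<and> b \<notin> {a, z, x}}"

lemma no_isolated_graph_on_link_avoiding:
  assumes u3: "uniform3 V H"
  shows "no_isolated_graph_on (common_nbrs_apart H a b) (link_avoiding H a b)"
  unfolding no_isolated_graph_on_def
proof (intro ballI conjI)
  fix z assume z: "z \<in> common_nbrs_apart H a b"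
  then obtain f where f: "f \<in> H" "{a, z} \<subseteq> f" "b \<notin> f"
    unfolding common_nbrs_apart_def by blast
  have "a \<noteq> z"
    using z unfolding common_nbrs_apart_def by blast
  obtain x where "f = {a, z, x}"
    by (rule uniform3_edge_through_pair[OF u3 f(1) _ _ \<open>a \<noteq> z\<close>]) (use f(2) in auto)
  then show "link_avoiding H a b z \<noteq> {}"
    using f unfolding link_avoiding_def by blast
  show "z \<notin> link_avoiding H a b z"
    using uniform3_edge_distinct[OF u3] unfolding link_avoiding_def by fastforce
  fix z' assume "z' \<in> common_nbrs_apart H a b"
  show "z' \<in> link_avoiding H a b z \<longleftrightarrow> z \<in> link_avoiding H a b z'"
    unfolding link_avoiding_def by (auto simp: insert_commute)
qed

lemma link_avoiding_trace_edge:
  assumes u3: "uniform3 V H" and x: "x \<in> link_avoiding H a b s" and "s \<in> S" "x \<notin> S"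
  shows "{a, s, x} \<in> H" "{a, s, x} \<inter> insert a (insert b S) = {a, s}"
proof -
  show "{a, s, x} \<in> H"
    using x unfolding link_avoiding_def by simp
  then have "x \<noteq> a"
    using uniform3_edge_distinct[OF u3] by fastforce
  then show "{a, s, x} \<inter> insert a (insert b S) = {a, s}"
    using x assms(3,4) unfolding link_avoiding_def by auto
qed

lemma contains_K2t_trace_of_links:
  assumes u3: "uniform3 V H" and ab: "a \<noteq> b" "a \<in> V" "b \<in> V"
    and S: "S \<subseteq> common_nbrs_apart H a b" "card S = t"
    and outside: "\<forall>s\<in>S. \<not> link_avoiding H a b s \<subseteq> S \<and> \<not> link_avoiding H b a s \<subseteq> S"
  shows "contains_trace V H (K2t_verts t) (K2t_edges t)"
proof (rule contains_K2t_traceI[OF ab])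
  show "S \<subseteq> V"
    using S(1) common_nbrs_apart_subset[OF u3] by blast
  show "finite S"
    using S(1) finite_common_nbrs_apart[OF u3] by (rule finite_subset)
  show "card S = t" "a \<notin> S" "b \<notin> S"
    using S unfolding common_nbrs_apart_def by auto
  fix c s assume "c \<in> {a, b}" "s \<in> S"
  then consider "c = a" | "c = b"
    by blast
  then show "\<exists>f\<in>H. f \<inter> insert a (insert b S) = {c, s}"
  proof cases
    case 1
    obtain x where x: "x \<in> link_avoiding H a b s" "x \<notin> S"
      using outside \<open>s \<in> S\<close> by blast
    show ?thesis
      using link_avoiding_trace_edge[OF u3 x(1) \<open>s \<in> S\<close> x(2)] 1 by blast
  next
    case 2
    obtain x where x: "x \<in> link_avoiding H b a s" "x \<notin> S"
      using outside \<open>s \<in> S\<close> by blast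
    show ?thesis
      using link_avoiding_trace_edge[OF u3 x(1) \<open>s \<in> S\<close> x(2)] 2 by (metis insert_commute)
  qed
qed

lemma card_common_nbrs_apart_le:
  assumes u3: "uniform3 V H" and no_trace: "\<not> contains_trace V H (K2t_verts t) (K2t_edges t)"
    and "a \<noteq> b"
  shows "card (common_nbrs_apart H a b) \<le> 3 * t - 3"
proof (rule ccontr)
  let ?Y = "common_nbrs_apart H a b"
  assume "\<not> ?thesis"
  then have "3 * t \<le> card ?Y + 2" "?Y \<noteq> {}"
    by auto
  then have "a \<in> V" "b \<in> V"
    using u3 unfolding common_nbrs_apart_def uniform3_def by blast+
  obtain S where "S \<subseteq> ?Y" "card S = t"
      "\<forall>s\<in>S. \<not> link_avoiding H a b s \<subseteq> S \<and> \<not> link_avoiding H b a s \<subseteq> S"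
    using exists_subset_with_nbrs_outside[OF finite_common_nbrs_apart[OF u3]
        no_isolated_graph_on_link_avoiding[OF u3]
        no_isolated_graph_on_link_avoiding[OF u3, of b a, folded common_nbrs_apart_commute]
        \<open>3 * t \<le> card ?Y + 2\<close>]
    by blast
  with contains_K2t_trace_of_links[OF u3 \<open>a \<noteq> b\<close> \<open>a \<in> V\<close> \<open>b \<in> V\<close>] no_trace show False
    by blast
qed

lemma Eu_edge_minus_subset_Vu:
  assumes u3: "uniform3 V H" and e: "e \<in> Eu H v u"
  shows "e - {u} \<subseteq> Vu H v u"
proof
  have eB: "e \<in> edgesB H" and eN: "e \<inter> N1 H v = {u}"
    using e unfolding Eu_def by auto
  have "v \<notin> e"
  proof
    assume "v \<in> e"
    have "v \<noteq> u" "e \<in> H" "u \<in> e"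
      using eN eB unfolding N1_def edgesB_def by auto
    obtain x where x: "x \<notin> {v, u}" "e = {v, u, x}"
      by (rule uniform3_edge_through_pair[OF u3 \<open>e \<in> H\<close> \<open>v \<in> e\<close> \<open>u \<in> e\<close> \<open>v \<noteq> u\<close>])
    then have "x \<in> N1 H v"
      using eB unfolding N1_def by auto
    then show False
      using x eN by auto
  qed
  fix w assume w: "w \<in> e - {u}"
  then have "w \<in> N2 H v"
    using eB eN \<open>v \<notin> e\<close> unfolding N2_def by auto
  then show "w \<in> Vu H v u"
    using e w unfolding Vu_def by auto
qed

lemma two_mult_card_Eu_le:
  assumes u3: "uniform3 V H" and uN: "u \<in> N1 H v"
    and cn: "\<And>a b. a \<noteq> b \<Longrightarrow> card (common_nbrs_apart H a b) \<le> c"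
  shows "2 * card (Eu H v u) \<le> c * card (Vu H v u)"
proof -
  have finE: "finite (Eu H v u)"
    using finite_edgesB[OF u3] unfolding Eu_def by simp
  have "Vu H v u \<subseteq> V"
    using u3 unfolding Vu_def N2_def edgesB_def uniform3_def by blast
  then have finV: "finite (Vu H v u)"
    using u3 finite_subset unfolding uniform3_def by blast
  have "u \<notin> Vu H v u"
    using uN unfolding Vu_def N2_def by simp
  have "card {w\<in>Vu H v u. w \<in> e} = 2" if e: "e \<in> Eu H v u" for e
  proof -
    have "{w\<in>Vu H v u. w \<in> e} = e - {u}"
      using Eu_edge_minus_subset_Vu[OF u3 e] \<open>u \<notin> Vu H v u\<close> by auto
    moreover have "card e = 3" "u \<in> e"
      using e u3 unfolding Eu_def edgesB_def uniform3_def by auto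
    ultimately show ?thesis
      by simp
  qed
  then have "2 * card (Eu H v u) = (\<Sum>w\<in>Vu H v u. card {e\<in>Eu H v u. w \<in> e})"
    using sum_multicount[OF finV finE, of "\<lambda>w e. w \<in> e" 2] by simp
  also have "\<dots> \<le> (\<Sum>w\<in>Vu H v u. c)"
  proof (rule sum_mono)
    fix w assume "w \<in> Vu H v u"
    then have "u \<noteq> w"
      using \<open>u \<notin> Vu H v u\<close> by auto
    have "card {e\<in>Eu H v u. w \<in> e} \<le> codegree (edgesB H) u w"
      unfolding codegree_def Eu_def using finite_edgesB[OF u3] by (intro card_mono) auto
    also have "\<dots> \<le> c"
      using codegree_edgesB_le_card_common_nbrs_apart[OF u3 \<open>u \<noteq> w\<close>] cn[OF \<open>u \<noteq> w\<close>] by simp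
    finally show "card {e\<in>Eu H v u. w \<in> e} \<le> c" .
  qed
  also have "\<dots> = c * card (Vu H v u)"
    by simp
  finally show ?thesis .
qed

lemma N1_vertex_in_common_nbrs_apart:
  assumes u3: "uniform3 V H" and e: "e \<in> edgesB H" "{u, z} \<subseteq> e" "v \<notin> e"
    and z: "z \<in> N1 H v" "z \<noteq> u"
  shows "z \<in> common_nbrs_apart H u v"
proof -
  obtain e' where e': "e' \<in> edgesB H" "{v, z} \<subseteq> e'" and "z \<noteq> v"
    using z(1) unfolding N1_def by blast
  show ?thesis
  proof (cases "u \<in> e'")
    case True
    have "u \<noteq> v"
      using e by auto
    then have "z \<in> common_nbrs_apart H v u"
      using edgesB_third_vertex_in_common_nbrs_apart[OF u3 e'(1), of v u z] True e'(2) \<open>z \<noteq> v\<close> z(2)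
      by auto
    then show ?thesis
      by (simp add: common_nbrs_apart_commute)
  next
    case False
    have "e \<in> H" "e' \<in> H"
      using e(1) e'(1) unfolding edgesB_def by auto
    then show ?thesis
      unfolding common_nbrs_apart_def using False e e' by blast
  qed
qed

lemma edgesB_at_vertex_subset:
  assumes u3: "uniform3 V H" and uN: "u \<in> N1 H v"
  shows "{e\<in>edgesB H. u \<in> e} \<subseteq> Eu H v u \<union> {e\<in>edgesB H. {u, v} \<subseteq> e} \<union>
      (\<Union>z\<in>common_nbrs_apart H u v. {e\<in>edgesB H. {u, z} \<subseteq> e})"
proof
  fix e assume e: "e \<in> {e\<in>edgesB H. u \<in> e}"
  show "e \<in> Eu H v u \<union> {e\<in>edgesB H. {u, v} \<subseteq> e} \<union>
      (\<Union>z\<in>common_nbrs_apart H u v. {e\<in>edgesB H. {u, z} \<subseteq> e})"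
  proof (cases "e \<inter> N1 H v = {u} \<or> v \<in> e")
    case True
    then show ?thesis
      using e unfolding Eu_def by auto
  next
    case False
    then obtain z where z: "z \<in> e" "z \<in> N1 H v" "z \<noteq> u"
      using e uN by blast
    then have "z \<in> common_nbrs_apart H u v"
      using N1_vertex_in_common_nbrs_apart[OF u3] e False by auto
    then show ?thesis
      using e z(1) by blast
  qed
qed

lemma degB_le_card_Eu:
  assumes u3: "uniform3 V H" and uN: "u \<in> N1 H v"
    and cn: "\<And>a b. a \<noteq> b \<Longrightarrow> card (common_nbrs_apart H a b) \<le> c"
  shows "degB H u \<le> card (Eu H v u) + c + c * c"
proof -
  define B where "B z = {e\<in>edgesB H. {u, z} \<subseteq> e}" for z
  let ?C = "common_nbrs_apart H u v"
  have finB: "finite (B z)" for z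
    using finite_edgesB[OF u3] unfolding B_def by simp
  have card_B: "card (B z) \<le> c" if "u \<noteq> z" for z
    using codegree_edgesB_le_card_common_nbrs_apart[OF u3 that] cn[OF that]
    unfolding B_def codegree_def by simp
  have "degB H u \<le> card (Eu H v u \<union> B v \<union> (\<Union>z\<in>?C. B z))"
    unfolding degB_def using edgesB_at_vertex_subset[OF u3 uN] finite_edgesB[OF u3] finB
      finite_common_nbrs_apart[OF u3]
    by (intro card_mono) (auto simp: Eu_def B_def)
  also have "\<dots> \<le> card (Eu H v u) + card (B v) + card (\<Union>z\<in>?C. B z)"
    by (meson card_Un_le add_le_mono1 le_trans)
  also have "card (\<Union>z\<in>?C. B z) \<le> (\<Sum>z\<in>?C. card (B z))"
    by (rule card_UN_le[OF finite_common_nbrs_apart[OF u3]])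
  also have "\<dots> \<le> (\<Sum>z\<in>?C. c)"
    by (rule sum_mono, rule card_B) (auto simp: common_nbrs_apart_def)
  also have "\<dots> \<le> c * c"
    using cn[of u v] uN unfolding N1_def by simp
  finally show ?thesis
    using card_B[of v] uN unfolding N1_def by simp
qed

lemma real_lower_bound_of_counts:
  fixes t d e w :: nat
  assumes "t \<ge> 3"
    and two_e: "2 * e \<le> (3 * t - 3) * w"
    and d: "d \<le> e + (3 * t - 3) + (3 * t - 3) * (3 * t - 3)"
  shows "2 / (3 * real t - 3) * (real d - (3 * real t - 3) - 3 * (real t - 1)^2 * (6 * real t - 2))
    \<le> real w"
proof -
  define c where "c = 3 * t - 3"
  have c: "real c = 3 * real t - 3" "real c > 0"
    using assms(1) unfolding c_def by (simp_all add: of_nat_diff)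
  have "real d \<le> real e + real c + real c * real c"
    using d unfolding c_def[symmetric] by (simp flip: of_nat_mult of_nat_add)
  moreover have "real c * real c = 3 * (real t - 1)^2 * 3"
    unfolding c(1) by (simp add: power2_eq_square algebra_simps)
  moreover have "\<dots> \<le> 3 * (real t - 1)^2 * (6 * real t - 2)"
    by (rule mult_left_mono) (use assms(1) in auto)
  ultimately have "real d - (3 * real t - 3) - 3 * (real t - 1)^2 * (6 * real t - 2) \<le> real e"
    using c(1) by linarith
  then have "2 / (3 * real t - 3) * (real d - (3 * real t - 3) - 3 * (real t - 1)^2 * (6 * real t - 2))
      \<le> 2 / real c * real e"
    unfolding c(1)[symmetric] by (rule mult_left_mono) simp
  also have "\<dots> \<le> real w"
    using two_e c(2) unfolding c_def[symmetric] by (simp add: field_simps flip: of_nat_mult)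
  finally show ?thesis .
qed

theorem mainTheorem7:
  fixes V :: "'a set" and H :: "'a set set" and t :: nat and v :: 'a
  assumes "t \<ge> 3"
    and "uniform3 V H"
    and "\<not> contains_trace V H (K2t_verts t) (K2t_edges t)"
    and "v \<in> V"
  shows "\<forall>u\<in>N1 H v. real (card (Vu H v u)) \<ge>
           2 / (3 * real t - 3) *
           (real (degB H u) - (3 * real t - 3) - 3 * (real t - 1)^2 * (6 * real t - 2))"
proof
  fix u assume uN: "u \<in> N1 H v"
  have cn: "\<And>a b. a \<noteq> b \<Longrightarrow> card (common_nbrs_apart H a b) \<le> 3 * t - 3"
    using card_common_nbrs_apart_le[OF assms(2,3)] .
  show "real (card (Vu H v u)) \<ge> 2 / (3 * real t - 3) *
      (real (degB H u) - (3 * real t - 3) - 3 * (real t - 1)^2 * (6 * real t - 2))"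
    using real_lower_bound_of_counts[OF assms(1) two_mult_card_Eu_le[OF assms(2) uN cn]
        degB_le_card_Eu[OF assms(2) uN cn]] .
qed

end
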